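(* In the post-attack setting with control policy $\gamma$ and attack policy $\phi$ (described in the context), suppose the state–action chain $\{(X_t,A_t)\}_{t\ge0}$ satisfies the Doeblin condition with parameters $(m_0,\lambda)$. Let $Z_t=(X_t,A_t,Y_t)$, let $\Omega(\gamma,\phi)=\{(z,z'):\mathbb P(Z_{t+1}=z'\mid Z_t=z)>0\}$, and let $f:\Omega(\gamma,\phi)\to\mathbb R$ with $\|f\|=\sup_{w\in\Omega(\gamma,\phi)}|f(w)|<\infty$. Set $S_n=\sum_{t=0}^{n-1}f(Z_t,Z_{t+1})$, $\lambda_1=\lambda R_{\min}\gamma_{\min}^2\phi_{\min}^2$ and $\mu=2(m_0+2)\|f\|/\lambda_1$. Then for every $\epsilon>0$ and every $n>\mu/\epsilon$, $$\mathbb P\big(|S_n-\mathbb E[S_n]|\ge n\epsilon\big)\le 2\exp\Big(-2\frac{(n\epsilon-\mu)^2}{n\mu^2}\Big).$$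
   Context: $\mathcal X=\{1,\dots,n\}$, $\mathcal A=\{1,\dots,m\}$; kernel $R_{(i,j),i'}=\mathbb P(X_{t+1}=i'\mid X_t=i,A_t=j)$; control policy $\gamma_{l,j}=\mathbb P(A_t=j\mid Y_t=l)$; attack policy $\phi_{(i,i'),l'}=\mathbb P(Y_{t+1}=l'\mid X_{t+1}=i',X_t=i)$. Given the past, $X_{t+1}\sim R_{(X_t,A_t),\cdot}$, then $Y_{t+1}\sim\phi_{(X_t,X_{t+1}),\cdot}$ conditionally independent of the rest given $(X_t,X_{t+1})$, then $A_{t+1}\sim\gamma_{Y_{t+1},\cdot}$ conditionally independent of the rest given $Y_{t+1}$. $R_{\min},\gamma_{\min},\phi_{\min}$ are the smallest nonzero entries of $R,\gamma,\phi$. Doeblin condition: a chain $W_t$ on a finite set $\mathcal W$ satisfies it with $(m_0,\lambda)$ if there is a probability measure $\psi$ on $\mathcal W$ with $\mathbb P(W_{m_0}\in B\mid W_0=w)\ge\lambda\psi(B)$ for all $w$, $B\subset\mathcal W$. *)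

theory Defs
  imports Main "HOL-Analysis.Analysis"
begin

(* States X = {1..N}, actions A = {1..M}, observations Y take values in X.
   Kernel R i j i' = R_{(i,j),i'}, control gamma l j = gamma_{l,j},
   attack phi i i' l' = phi_{(i,i'),l'}. *)

definition Xs :: "nat \<Rightarrow> nat set" where "Xs N = {1..N}"
definition As :: "nat \<Rightarrow> nat set" where "As M = {1..M}"

definition Zs :: "nat \<Rightarrow> nat \<Rightarrow> (nat \<times> nat \<times> nat) set" where
  "Zs N M = Xs N \<times> As M \<times> Xs N"

definition kernelZ :: "(nat \<Rightarrow> nat \<Rightarrow> nat \<Rightarrow> real) \<Rightarrow> (nat \<Rightarrow> nat \<Rightarrow> real) \<Rightarrow>
    (nat \<Rightarrow> nat \<Rightarrow> nat \<Rightarrow> real) \<Rightarrow> nat \<times> nat \<times> nat \<Rightarrow> nat \<times> nat \<times> nat \<Rightarrow> real" where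
  "kernelZ R \<gamma> \<phi> z z' = (case z of (i, j, l) \<Rightarrow> case z' of (i', j', l') \<Rightarrow>
      R i j i' * \<phi> i i' l' * \<gamma> l' j')"

definition kernelXA :: "nat \<Rightarrow> (nat \<Rightarrow> nat \<Rightarrow> nat \<Rightarrow> real) \<Rightarrow> (nat \<Rightarrow> nat \<Rightarrow> real) \<Rightarrow>
    (nat \<Rightarrow> nat \<Rightarrow> nat \<Rightarrow> real) \<Rightarrow> nat \<times> nat \<Rightarrow> nat \<times> nat \<Rightarrow> real" where
  "kernelXA N R \<gamma> \<phi> w w' = (case w of (i, j) \<Rightarrow> case w' of (i', j') \<Rightarrow>
      R i j i' * (\<Sum>l\<in>Xs N. \<phi> i i' l * \<gamma> l j'))"

fun kpow :: "'a set \<Rightarrow> ('a \<Rightarrow> 'a \<Rightarrow> real) \<Rightarrow> nat \<Rightarrow> 'a \<Rightarrow> 'a \<Rightarrow> real" where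
  "kpow W K 0 w w' = (if w = w' then 1 else 0)"
| "kpow W K (Suc m) w w' = (\<Sum>v\<in>W. kpow W K m w v * K v w')"

definition doeblin :: "'a set \<Rightarrow> ('a \<Rightarrow> 'a \<Rightarrow> real) \<Rightarrow> nat \<Rightarrow> real \<Rightarrow> bool" where
  "doeblin W K m0 lam \<longleftrightarrow> lam > 0 \<and>
     (\<exists>\<psi>. (\<forall>w\<in>W. \<psi> w \<ge> 0) \<and> sum \<psi> W = 1 \<and>
        (\<forall>w\<in>W. \<forall>B. B \<subseteq> W \<longrightarrow> (\<Sum>w'\<in>B. kpow W K m0 w w') \<ge> lam * sum \<psi> B))"

definition min_nonzero :: "real set \<Rightarrow> real" where
  "min_nonzero S = Min (S - {0})"

definition Rmin :: "nat \<Rightarrow> nat \<Rightarrow> (nat \<Rightarrow> nat \<Rightarrow> nat \<Rightarrow> real) \<Rightarrow> real" where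
  "Rmin N M R = min_nonzero {R i j i' | i j i'. i \<in> Xs N \<and> j \<in> As M \<and> i' \<in> Xs N}"

definition gmin :: "nat \<Rightarrow> nat \<Rightarrow> (nat \<Rightarrow> nat \<Rightarrow> real) \<Rightarrow> real" where
  "gmin N M \<gamma> = min_nonzero {\<gamma> l j | l j. l \<in> Xs N \<and> j \<in> As M}"

definition phimin :: "nat \<Rightarrow> (nat \<Rightarrow> nat \<Rightarrow> nat \<Rightarrow> real) \<Rightarrow> real" where
  "phimin N \<phi> = min_nonzero {\<phi> i i' l | i i' l. i \<in> Xs N \<and> i' \<in> Xs N \<and> l \<in> Xs N}"

definition Omega :: "nat \<Rightarrow> nat \<Rightarrow> (nat \<Rightarrow> nat \<Rightarrow> nat \<Rightarrow> real) \<Rightarrow> (nat \<Rightarrow> nat \<Rightarrow> real) \<Rightarrow>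
    (nat \<Rightarrow> nat \<Rightarrow> nat \<Rightarrow> real) \<Rightarrow> ((nat \<times> nat \<times> nat) \<times> (nat \<times> nat \<times> nat)) set" where
  "Omega N M R \<gamma> \<phi> = {(z, z'). z \<in> Zs N M \<and> z' \<in> Zs N M \<and> kernelZ R \<gamma> \<phi> z z' > 0}"

definition fnorm :: "((nat \<times> nat \<times> nat) \<times> (nat \<times> nat \<times> nat)) set \<Rightarrow>
    ((nat \<times> nat \<times> nat) \<times> (nat \<times> nat \<times> nat) \<Rightarrow> real) \<Rightarrow> real" where
  "fnorm \<Omega> f = Max ((\<lambda>w. \<bar>f w\<bar>) ` \<Omega>)"

definition paths :: "nat \<Rightarrow> nat \<Rightarrow> nat \<Rightarrow> (nat \<Rightarrow> nat \<times> nat \<times> nat) set" where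
  "paths N M n = PiE {..n} (\<lambda>_. Zs N M)"

definition path_prob :: "('a \<Rightarrow> real) \<Rightarrow> ('a \<Rightarrow> 'a \<Rightarrow> real) \<Rightarrow> nat \<Rightarrow> (nat \<Rightarrow> 'a) \<Rightarrow> real" where
  "path_prob p0 K n p = p0 (p 0) * (\<Prod>t<n. K (p t) (p (Suc t)))"

definition Ssum :: "('a \<times> 'a \<Rightarrow> real) \<Rightarrow> nat \<Rightarrow> (nat \<Rightarrow> 'a) \<Rightarrow> real" where
  "Ssum f n p = (\<Sum>t<n. f (p t, p (Suc t)))"

end

theory Submission
  imports Defs "HOL-Probability.Hoeffding"
begin

text \<open>Let \<open>h\<^sub>k(z) = E[S\<^sub>k | Z\<^sub>0 = z]\<close>, the \<open>k\<close>-th iterate of the Bellman operator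
  \<open>T v (z) = E[f(z, Z\<^sub>1) + v(Z\<^sub>1) | Z\<^sub>0 = z]\<close> applied to \<open>0\<close>. Conditionally on \<open>Z\<^sub>t = z\<close>, the
  martingale increment \<open>f(z, Z\<^sub>t\<^sub>+\<^sub>1) + h\<^sub>k(Z\<^sub>t\<^sub>+\<^sub>1) - h\<^sub>k\<^sub>+\<^sub>1(z)\<close> has mean zero and ranges over
  an interval of length \<open>2\<parallel>f\<parallel> + osc h\<^sub>k\<close>, so Hoeffding's lemma and induction on \<open>n\<close> bound the
  moment generating function of \<open>S\<^sub>n\<close>; Chernoff's bound with the optimal exponent, applied to
  \<open>f\<close> and to \<open>-f\<close>, gives the two tails.

  The oscillation of \<open>h\<^sub>k\<close> is controlled through the state-action chain: a transition of \<open>Z\<^sub>t\<close> out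
  of \<open>(x, a, y)\<close> does not depend on \<open>y\<close>, so \<open>h\<^sub>k\<^sub>+\<^sub>1 = g + (\<Sum>\<^sub>s\<^sub><\<^sub>k P\<^sup>s v) \<circ> \<pi>\<close> where \<open>P\<close> is
  the kernel of \<open>(X\<^sub>t, A\<^sub>t)\<close>, \<open>\<pi>\<close> forgets the observation and \<open>g, v\<close> are bounded by \<open>\<parallel>f\<parallel>\<close>.
  Doeblin's condition makes \<open>P\<^sup>m\<^sup>0\<close> contract oscillations by the factor \<open>1 - \<lambda>\<close>, hence
  \<open>osc h\<^sub>k \<le> 2\<parallel>f\<parallel> + 2\<parallel>f\<parallel> m\<^sub>0 / \<lambda>\<close>. The resulting constant \<open>4\<parallel>f\<parallel> + 2\<parallel>f\<parallel> m\<^sub>0 / \<lambda>\<close> is at most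
  \<open>\<mu>\<close>, because \<open>\<lambda>\<^sub>1 \<le> \<lambda> \<le> 1\<close>.\<close>

lemma Hoeffdings_lemma_finite:
  fixes q X :: "'a \<Rightarrow> real" and a b l :: real
  assumes "finite A" and q_nonneg: "\<And>x. x \<in> A \<Longrightarrow> 0 \<le> q x" and "sum q A = 1"
    and range: "\<And>x. x \<in> A \<Longrightarrow> 0 < q x \<Longrightarrow> X x \<in> {a..b}"
    and mean: "(\<Sum>x\<in>A. q x * X x) = 0" and "0 \<le> l"
  shows "(\<Sum>x\<in>A. q x * exp (l * X x)) \<le> exp (l\<^sup>2 * (b - a)\<^sup>2 / 8)"
proof (cases "l = 0")
  case True
  then show ?thesis using \<open>sum q A = 1\<close> by simp
next
  case False
  define q' where "q' x = (if x \<in> A then q x else 0)" for x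
  have q'_nonneg: "q' x \<ge> 0" for x
    using q_nonneg by (simp add: q'_def)
  have "(\<integral>\<^sup>+x. ennreal (q' x) \<partial>count_space UNIV) = (\<integral>\<^sup>+x. ennreal (q x) \<partial>count_space A)"
    by (auto simp: nn_integral_count_space_indicator q'_def intro!: nn_integral_cong split: split_indicator)
  also have "\<dots> = 1"
    using assms by (simp add: nn_integral_count_space_finite sum_ennreal)
  finally have pmf_Q: "pmf (embed_pmf q') x = q' x" for x
    using q'_nonneg by (simp add: pmf_embed_pmf)
  have set_Q: "set_pmf (embed_pmf q') \<subseteq> {x\<in>A. q x > 0}"
    using q_nonneg by (auto simp: set_pmf_eq pmf_Q q'_def order_less_le)
  interpret Q: interval_bounded_random_variable "measure_pmf (embed_pmf q')" X a b
    by unfold_locales (use set_Q range in \<open>auto intro!: AE_pmfI\<close>)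
  have "measure_pmf.expectation (embed_pmf q') X = 0"
    using mean set_Q
    by (subst integral_measure_pmf_real[OF \<open>finite A\<close>]) (auto simp: pmf_Q q'_def mult.commute)
  then have "(\<integral>\<^sup>+x. exp (l * X x) \<partial>measure_pmf (embed_pmf q')) \<le> ennreal (exp (l\<^sup>2 * (b - a)\<^sup>2 / 8))"
    using False \<open>0 \<le> l\<close> by (intro Q.Hoeffdings_lemma_nn_integral_0) auto
  also have "(\<integral>\<^sup>+x. exp (l * X x) \<partial>measure_pmf (embed_pmf q')) = ennreal (\<Sum>x\<in>A. q x * exp (l * X x))"
    using set_Q q_nonneg \<open>finite A\<close>
    by (subst nn_integral_measure_pmf_support[of A])
       (auto simp: pmf_Q q'_def mult.commute sum_ennreal simp flip: ennreal_mult)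
  finally show ?thesis by simp
qed

lemma sum_mult_bounds:
  fixes q u :: "'a \<Rightarrow> real"
  assumes "\<And>x. x \<in> A \<Longrightarrow> 0 \<le> q x" and "\<And>x. x \<in> A \<Longrightarrow> lo \<le> u x \<and> u x \<le> hi"
  shows "sum q A * lo \<le> (\<Sum>x\<in>A. q x * u x)" and "(\<Sum>x\<in>A. q x * u x) \<le> sum q A * hi"
  using assms by (auto simp: sum_distrib_right intro!: sum_mono mult_left_mono)

lemma sum_ge_le_sum_exp:
  fixes w X :: "'a \<Rightarrow> real"
  assumes "finite A" and "\<And>x. x \<in> A \<Longrightarrow> 0 \<le> w x" and "0 \<le> s"
  shows "(\<Sum>x\<in>{x\<in>A. t \<le> X x}. w x) \<le> (\<Sum>x\<in>A. w x * exp (s * (X x - t)))"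
proof -
  have "(\<Sum>x\<in>{x\<in>A. t \<le> X x}. w x) \<le> (\<Sum>x\<in>{x\<in>A. t \<le> X x}. w x * exp (s * (X x - t)))"
  proof (intro sum_mono)
    fix x assume "x \<in> {x\<in>A. t \<le> X x}"
    then have "0 \<le> w x" and "1 \<le> exp (s * (X x - t))"
      using assms by auto
    then show "w x \<le> w x * exp (s * (X x - t))"
      using mult_left_mono[of 1] by fastforce
  qed
  also have "\<dots> \<le> (\<Sum>x\<in>A. w x * exp (s * (X x - t)))"
    using assms by (intro sum_mono2) auto
  finally show ?thesis .
qed

lemma sum_abs_ge_le:
  fixes w X :: "'a \<Rightarrow> real"
  assumes "finite A" and "\<And>x. x \<in> A \<Longrightarrow> 0 \<le> w x"
  shows "(\<Sum>x\<in>{x\<in>A. t \<le> \<bar>X x\<bar>}. w x) \<le> (\<Sum>x\<in>{x\<in>A. t \<le> X x}. w x) + (\<Sum>x\<in>{x\<in>A. t \<le> - X x}. w x)"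
proof -
  have "(\<Sum>x\<in>{x\<in>A. t \<le> \<bar>X x\<bar>}. w x) \<le> (\<Sum>x\<in>{x\<in>A. t \<le> X x} \<union> {x\<in>A. t \<le> - X x}. w x)"
    using assms by (intro sum_mono2) (auto simp: abs_if split: if_splits)
  also have "\<dots> \<le> (\<Sum>x\<in>{x\<in>A. t \<le> X x}. w x) + (\<Sum>x\<in>{x\<in>A. t \<le> - X x}. w x)"
    using assms by (subst sum_Un) (auto intro!: sum_nonneg)
  finally show ?thesis .
qed

lemma sum_power_div_le:
  fixes r :: real
  assumes "0 < m" and "0 \<le> r" and "r < 1"
  shows "(\<Sum>s<k. r ^ (s div m)) \<le> m / (1 - r)"
proof -
  have "(\<Sum>s<k. r ^ (s div m)) \<le> (\<Sum>s<k * m. r ^ (s div m))"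
    using assms by (intro sum_mono2) auto
  also have "\<dots> = (\<Sum>j<k. \<Sum>s = j * m..<j * m + m. r ^ (s div m))"
    by (rule sum.nat_group[symmetric])
  also have "\<dots> = (\<Sum>j<k. m * r ^ j)"
  proof (intro sum.cong refl)
    fix j
    have "s div m = j" if "s \<in> {j * m..<j * m + m}" for s
      using that by (intro div_nat_eqI) (auto simp: algebra_simps)
    then show "(\<Sum>s = j * m..<j * m + m. r ^ (s div m)) = m * r ^ j"
      by simp
  qed
  also have "\<dots> = m * ((1 - r ^ k) / (1 - r))"
    using assms by (simp add: sum_distrib_left[symmetric] sum_gp_strict)
  also have "\<dots> \<le> m / (1 - r)"
    using assms by (simp add: divide_right_mono)
  finally show ?thesis .
qed

lemma sum_PiE_insert:
  fixes F :: "('a \<Rightarrow> 'b) \<Rightarrow> real"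
  assumes "x \<notin> S"
  shows "(\<Sum>p\<in>PiE (insert x S) T. F p) = (\<Sum>g\<in>PiE S T. \<Sum>y\<in>T x. F (g(x := y)))"
proof -
  have "(\<Sum>p\<in>PiE (insert x S) T. F p) = (\<Sum>(y, g)\<in>T x \<times> PiE S T. F (g(x := y)))"
    unfolding PiE_insert_eq using inj_combinator[OF assms] by (subst sum.reindex) (auto simp: case_prod_unfold)
  also have "\<dots> = (\<Sum>g\<in>PiE S T. \<Sum>y\<in>T x. F (g(x := y)))"
    by (subst sum.swap) (simp add: sum.cartesian_product)
  finally show ?thesis .
qed

lemma path_prob_fun_upd_Suc:
  "path_prob p0 K (Suc n) (q(Suc n := z)) = path_prob p0 K n q * K (q n) z"
proof -
  have "(\<Prod>t<n. K ((q(Suc n := z)) t) ((q(Suc n := z)) (Suc t))) = (\<Prod>t<n. K (q t) (q (Suc t)))"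
    by (intro prod.cong) auto
  then show ?thesis
    by (simp add: path_prob_def)
qed

lemma Ssum_fun_upd_Suc:
  "Ssum f (Suc n) (q(Suc n := z)) = Ssum f n q + f (q n, z)"
proof -
  have "(\<Sum>t<n. f ((q(Suc n := z)) t, (q(Suc n := z)) (Suc t))) = (\<Sum>t<n. f (q t, q (Suc t)))"
    by (intro sum.cong) auto
  then show ?thesis
    by (simp add: Ssum_def)
qed

lemma path_prob_mult_exp_Ssum:
  "path_prob p0 K n p * exp (s * Ssum f n p)
     = path_prob p0 (\<lambda>z z'. K z z' * exp (s * f (z, z'))) n p"
  by (simp add: path_prob_def Ssum_def sum_distrib_left exp_sum prod.distrib)

definition kapply :: "'a set \<Rightarrow> ('a \<Rightarrow> 'a \<Rightarrow> real) \<Rightarrow> ('a \<Rightarrow> real) \<Rightarrow> 'a \<Rightarrow> real" where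
  "kapply W P u w = (\<Sum>w'\<in>W. P w w' * u w')"

lemma kapply_sum:
  "finite I \<Longrightarrow> kapply W P (\<lambda>w. \<Sum>i\<in>I. u i w) w = (\<Sum>i\<in>I. kapply W P (u i) w)"
  unfolding kapply_def sum_distrib_left by (rule sum.swap)

lemma kapply_cong: "(\<And>w'. w' \<in> W \<Longrightarrow> u w' = v w') \<Longrightarrow> kapply W P u w = kapply W P v w"
  by (simp add: kapply_def)

lemma kapply_add: "kapply W P (\<lambda>w'. u w' + v w') w = kapply W P u w + kapply W P v w"
  by (simp add: kapply_def distrib_left sum.distrib)

lemma kapply_mono:
  assumes "\<And>w'. w' \<in> W \<Longrightarrow> 0 \<le> P w w'" and "\<And>w'. w' \<in> W \<Longrightarrow> u w' \<le> v w'"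
  shows "kapply W P u w \<le> kapply W P v w"
  unfolding kapply_def using assms by (intro sum_mono mult_left_mono) auto

lemma path_sum_funpow_kapply:
  "(\<Sum>p\<in>PiE {..n} (\<lambda>_. W). path_prob p0 K n p * u (p n)) = (\<Sum>w\<in>W. p0 w * (kapply W K ^^ n) u w)"
proof (induction n arbitrary: u)
  case 0
  have "{..0::nat} = insert 0 {}"
    by auto
  then show ?case
    by (simp add: sum_PiE_insert path_prob_def)
next
  case (Suc n)
  have "{..Suc n} = insert (Suc n) {..n}"
    by auto
  then have "(\<Sum>p\<in>PiE {..Suc n} (\<lambda>_. W). path_prob p0 K (Suc n) p * u (p (Suc n)))
      = (\<Sum>q\<in>PiE {..n} (\<lambda>_. W). path_prob p0 K n q * kapply W K u (q n))"
    by (simp add: sum_PiE_insert path_prob_fun_upd_Suc kapply_def sum_distrib_left mult.assoc)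
  also have "\<dots> = (\<Sum>w\<in>W. p0 w * (kapply W K ^^ Suc n) u w)"
    by (simp add: Suc.IH funpow_Suc_right del: funpow.simps)
  finally show ?case .
qed

definition bellman_op :: "'a set \<Rightarrow> ('a \<Rightarrow> 'a \<Rightarrow> real) \<Rightarrow> ('a \<times> 'a \<Rightarrow> real) \<Rightarrow> ('a \<Rightarrow> real) \<Rightarrow> 'a \<Rightarrow> real" where
  "bellman_op W P f v w = (\<Sum>w'\<in>W. P w w' * (f (w, w') + v w'))"

definition mean_reward :: "'a set \<Rightarrow> ('a \<Rightarrow> 'a \<Rightarrow> real) \<Rightarrow> ('a \<times> 'a \<Rightarrow> real) \<Rightarrow> 'a \<Rightarrow> real" where
  "mean_reward W P f w = kapply W P (\<lambda>w'. f (w, w')) w"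

lemma bellman_op_eq: "bellman_op W P f v w = mean_reward W P f w + kapply W P v w"
  by (simp add: bellman_op_def mean_reward_def kapply_def distrib_left sum.distrib)

lemma funpow_bellman_op_Suc:
  "(bellman_op W P f ^^ Suc k) v w = mean_reward W P f w + kapply W P ((bellman_op W P f ^^ k) v) w"
  unfolding funpow.simps o_apply by (rule bellman_op_eq)

lemma bellman_op_uminus: "bellman_op W P (\<lambda>x. - f x) (\<lambda>w. - v w) = (\<lambda>w. - bellman_op W P f v w)"
  by (simp add: fun_eq_iff bellman_op_def distrib_left sum.distrib right_diff_distrib sum_subtractf sum_negf)

lemma funpow_bellman_op_uminus:
  "(bellman_op W P (\<lambda>x. - f x) ^^ k) (\<lambda>_. 0) = (\<lambda>w. - (bellman_op W P f ^^ k) (\<lambda>_. 0) w)"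
  by (induction k) (simp_all add: bellman_op_uminus)

section \<open>Oscillation and Doeblin\<close>

definition osc_le :: "'a set \<Rightarrow> ('a \<Rightarrow> real) \<Rightarrow> real \<Rightarrow> bool" where
  "osc_le W u d \<longleftrightarrow> (\<forall>x\<in>W. \<forall>y\<in>W. u x - u y \<le> d)"

lemma osc_le_interval:
  assumes "finite W" and "W \<noteq> {}" and "osc_le W u d"
  obtains m where "\<And>w. w \<in> W \<Longrightarrow> m \<le> u w \<and> u w \<le> m + d"
proof
  have "Min (u ` W) \<in> u ` W"
    using assms by (intro Min_in) auto
  then obtain w0 where "w0 \<in> W" and "u w0 = Min (u ` W)"
    by auto
  fix w assume "w \<in> W"
  then have "Min (u ` W) \<le> u w" and "u w - u w0 \<le> d"
    using assms \<open>w0 \<in> W\<close> unfolding osc_le_def by auto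
  then show "Min (u ` W) \<le> u w \<and> u w \<le> Min (u ` W) + d"
    using \<open>u w0 = Min (u ` W)\<close> by simp
qed

lemma osc_le_uminus: "osc_le W (\<lambda>w. - u w) d \<longleftrightarrow> osc_le W u d"
  unfolding osc_le_def by (metis diff_minus_eq_add uminus_add_conv_diff)

lemma doeblin_0_subsingleton:
  assumes "doeblin W P 0 lam" and "x \<in> W" and "y \<in> W"
  shows "x = y"
proof (rule ccontr)
  assume "x \<noteq> y"
  from assms(1) obtain \<psi> where "sum \<psi> W = 1"
    and minor: "\<And>w B. w \<in> W \<Longrightarrow> B \<subseteq> W \<Longrightarrow> lam * sum \<psi> B \<le> (\<Sum>w'\<in>B. kpow W P 0 w w')"
    and "\<forall>w\<in>W. \<psi> w \<ge> 0" and "lam > 0"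
    unfolding doeblin_def by blast
  \<comment> \<open>\<open>kpow W P 0\<close> is the identity, so the minorization at a point \<open>w \<noteq> w'\<close> kills \<open>\<psi> w'\<close>\<close>
  have "\<psi> w' = 0" if "w' \<in> W" for w'
  proof -
    obtain w where "w \<in> W" "w \<noteq> w'"
      using \<open>x \<noteq> y\<close> assms(2,3) by blast
    then have "lam * \<psi> w' \<le> 0"
      using minor[of w "{w'}"] that by simp
    then show ?thesis
      using \<open>lam > 0\<close> \<open>\<forall>w\<in>W. \<psi> w \<ge> 0\<close> that by (simp add: mult_le_0_iff order_antisym)
  qed
  then show False
    using \<open>sum \<psi> W = 1\<close> by simp
qed

locale stochastic_kernel =
  fixes W :: "'a set" and P :: "'a \<Rightarrow> 'a \<Rightarrow> real"
  assumes finite_W: "finite W"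
    and nonneg: "\<lbrakk>w \<in> W; w' \<in> W\<rbrakk> \<Longrightarrow> 0 \<le> P w w'"
    and row_sum: "w \<in> W \<Longrightarrow> sum (P w) W = 1"
begin

lemma kapply_bounds:
  assumes "w \<in> W" and "\<And>w'. w' \<in> W \<Longrightarrow> lo \<le> u w' \<and> u w' \<le> hi"
  shows "lo \<le> kapply W P u w" and "kapply W P u w \<le> hi"
  using sum_mult_bounds[of W "P w" lo u hi] assms nonneg row_sum by (auto simp: kapply_def)

lemma kapply_abs_le:
  assumes "w \<in> W" and "\<And>w'. w' \<in> W \<Longrightarrow> 0 < P w w' \<Longrightarrow> \<bar>u w'\<bar> \<le> F"
  shows "\<bar>kapply W P u w\<bar> \<le> F"
proof -
  have "\<bar>kapply W P u w\<bar> \<le> (\<Sum>w'\<in>W. P w w' * \<bar>u w'\<bar>)"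
    unfolding kapply_def using nonneg assms(1) by (auto intro: order_trans[OF sum_abs] simp: abs_mult)
  also have "\<dots> \<le> (\<Sum>w'\<in>W. P w w' * F)"
  proof (intro sum_mono)
    fix w' assume "w' \<in> W"
    then show "P w w' * \<bar>u w'\<bar> \<le> P w w' * F"
      using assms nonneg[of w w'] by (cases "P w w' = 0") (auto intro: mult_left_mono)
  qed
  also have "\<dots> = F"
    using row_sum assms(1) by (simp flip: sum_distrib_right)
  finally show ?thesis .
qed

lemma support_nonempty:
  assumes "w \<in> W"
  obtains w' where "w' \<in> W" and "0 < P w w'"
proof -
  obtain w' where "w' \<in> W" and "P w w' \<noteq> 0"
    using row_sum[OF assms] by (metis sum.neutral zero_neq_one)
  then show thesis
    using nonneg[OF assms] by (intro that) (auto simp: order_less_le)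
qed

lemma osc_le_kapply:
  assumes "osc_le W u d"
  shows "osc_le W (kapply W P u) d"
  unfolding osc_le_def
proof (intro ballI)
  fix x y assume "x \<in> W" "y \<in> W"
  then obtain m where m: "\<And>w. w \<in> W \<Longrightarrow> m \<le> u w \<and> u w \<le> m + d"
    using osc_le_interval[OF finite_W _ assms] by blast
  have "kapply W P u x \<le> m + d" and "m \<le> kapply W P u y"
    using kapply_bounds[OF \<open>x \<in> W\<close> m] kapply_bounds[OF \<open>y \<in> W\<close> m] by auto
  then show "kapply W P u x - kapply W P u y \<le> d"
    by simp
qed

lemma osc_le_funpow_kapply: "osc_le W u d \<Longrightarrow> osc_le W ((kapply W P ^^ s) u) d"
  by (induction s) (auto intro: osc_le_kapply)

lemma kpow_row_sum: "w \<in> W \<Longrightarrow> sum (kpow W P m w) W = 1"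
proof (induction m)
  case 0
  then show ?case
    using finite_W by simp
next
  case (Suc m)
  have "sum (kpow W P (Suc m) w) W = (\<Sum>w'\<in>W. \<Sum>v\<in>W. kpow W P m w v * P v w')"
    by simp
  also have "\<dots> = (\<Sum>v\<in>W. kpow W P m w v * sum (P v) W)"
    by (subst sum.swap) (simp add: sum_distrib_left)
  finally show ?case
    using Suc row_sum by simp
qed

lemma funpow_kapply_eq_kpow:
  "w \<in> W \<Longrightarrow> (kapply W P ^^ m) u w = (\<Sum>w'\<in>W. kpow W P m w w' * u w')"
proof (induction m arbitrary: u)
  case 0
  have "(\<Sum>w'\<in>W. kpow W P 0 w w' * u w') = (\<Sum>w'\<in>W. if w = w' then u w' else 0)"
    by (intro sum.cong) auto
  then show ?case
    using 0 finite_W by simp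
next
  case (Suc m)
  have "(kapply W P ^^ Suc m) u w = (\<Sum>v\<in>W. kpow W P m w v * kapply W P u v)"
    using Suc by (simp add: funpow_Suc_right del: funpow.simps)
  also have "\<dots> = (\<Sum>w'\<in>W. kpow W P (Suc m) w w' * u w')"
    unfolding kapply_def kpow.simps sum_distrib_left sum_distrib_right by (subst sum.swap) (simp add: mult.assoc)
  finally show ?case .
qed

lemma doeblin_le_1:
  assumes "doeblin W P m0 lam" and "W \<noteq> {}"
  shows "lam \<le> 1"
proof -
  obtain \<psi> w where "sum \<psi> W = 1" and "w \<in> W"
    and "lam * sum \<psi> W \<le> sum (kpow W P m0 w) W"
    using assms unfolding doeblin_def by blast
  then show ?thesis
    using kpow_row_sum by simp
qed

text \<open>Doeblin's minorization splits \<open>P\<^sup>m\<^sup>0(w, \<cdot>)\<close> as \<open>\<lambda> \<psi> + q w\<close> with \<open>q w\<close> of mass \<open>1 - \<lambda>\<close>;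
  the common part \<open>\<lambda> \<psi>\<close> cancels in differences.\<close>

lemma osc_le_doeblin_contraction:
  assumes doeb: "doeblin W P m0 lam" and "osc_le W u d"
  shows "osc_le W ((kapply W P ^^ m0) u) ((1 - lam) * d)"
  unfolding osc_le_def
proof (intro ballI)
  fix x y assume "x \<in> W" "y \<in> W"
  then obtain m where m: "\<And>w. w \<in> W \<Longrightarrow> m \<le> u w \<and> u w \<le> m + d"
    using osc_le_interval[OF finite_W _ assms(2)] by blast
  from doeb obtain \<psi> where "sum \<psi> W = 1"
    and minor: "\<And>w B. w \<in> W \<Longrightarrow> B \<subseteq> W \<Longrightarrow> lam * sum \<psi> B \<le> (\<Sum>w'\<in>B. kpow W P m0 w w')"
    unfolding doeblin_def by blast
  define q where "q w w' = kpow W P m0 w w' - lam * \<psi> w'" for w w'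
  have q_nonneg: "0 \<le> q w w'" if "w \<in> W" "w' \<in> W" for w w'
    using minor[of w "{w'}"] that by (simp add: q_def)
  have q_sum: "sum (q w) W = 1 - lam" if "w \<in> W" for w
    using kpow_row_sum[OF that] \<open>sum \<psi> W = 1\<close> by (simp add: q_def sum_subtractf flip: sum_distrib_left)
  have split: "(kapply W P ^^ m0) u w = (\<Sum>w'\<in>W. q w w' * u w') + lam * (\<Sum>w'\<in>W. \<psi> w' * u w')"
    if "w \<in> W" for w
    using that by (simp add: funpow_kapply_eq_kpow q_def left_diff_distrib sum_subtractf sum_distrib_left mult.assoc)
  have "(\<Sum>w'\<in>W. q x w' * u w') \<le> (1 - lam) * (m + d)"
    using sum_mult_bounds(2)[of W "q x" m u "m + d"] q_nonneg \<open>x \<in> W\<close> m q_sum by auto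
  moreover have "(1 - lam) * m \<le> (\<Sum>w'\<in>W. q y w' * u w')"
    using sum_mult_bounds(1)[of W "q y" m u "m + d"] q_nonneg \<open>y \<in> W\<close> m q_sum by auto
  ultimately show "(kapply W P ^^ m0) u x - (kapply W P ^^ m0) u y \<le> (1 - lam) * d"
    unfolding split[OF \<open>x \<in> W\<close>] split[OF \<open>y \<in> W\<close>] by (simp add: algebra_simps)
qed

lemma osc_le_doeblin_funpow:
  assumes doeb: "doeblin W P m0 lam" and "0 < m0" and "osc_le W u d"
  shows "osc_le W ((kapply W P ^^ s) u) ((1 - lam) ^ (s div m0) * d)"
proof (induction s rule: less_induct)
  case (less s)
  show ?case
  proof (cases "s < m0")
    case True
    then show ?thesis
      using osc_le_funpow_kapply[OF assms(3)] by simp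
  next
    case False
    then have "(kapply W P ^^ s) u = (kapply W P ^^ m0) ((kapply W P ^^ (s - m0)) u)"
      by (metis funpow_add le_add_diff_inverse not_less o_apply)
    moreover have "s div m0 = Suc ((s - m0) div m0)"
      using False \<open>0 < m0\<close> by (simp add: le_div_geq)
    moreover have "osc_le W ((kapply W P ^^ (s - m0)) u) ((1 - lam) ^ ((s - m0) div m0) * d)"
      using less.IH False \<open>0 < m0\<close> by simp
    ultimately show ?thesis
      using osc_le_doeblin_contraction[OF doeb] by (simp add: mult.assoc)
  qed
qed

lemma osc_le_sum_funpow_kapply:
  assumes doeb: "doeblin W P m0 lam" and "osc_le W v d"
  shows "osc_le W (\<lambda>w. \<Sum>s<k. (kapply W P ^^ s) v w) (d * m0 / lam)"
  unfolding osc_le_def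
proof (intro ballI)
  fix x y assume "x \<in> W" "y \<in> W"
  have "0 < lam"
    using doeb unfolding doeblin_def by blast
  have "lam \<le> 1"
    using doeblin_le_1[OF doeb] \<open>x \<in> W\<close> by blast
  have "0 \<le> d"
    using assms(2) \<open>x \<in> W\<close> unfolding osc_le_def by fastforce
  show "(\<Sum>s<k. (kapply W P ^^ s) v x) - (\<Sum>s<k. (kapply W P ^^ s) v y) \<le> d * m0 / lam"
  proof (cases "m0 = 0")
    case True
    then have "x = y"
      using doeblin_0_subsingleton[of W P lam x y] doeb \<open>x \<in> W\<close> \<open>y \<in> W\<close> by simp
    then show ?thesis
      using True by simp
  next
    case False
    have "(\<Sum>s<k. (kapply W P ^^ s) v x) - (\<Sum>s<k. (kapply W P ^^ s) v y)
        \<le> (\<Sum>s<k. (1 - lam) ^ (s div m0) * d)"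
      unfolding sum_subtractf[symmetric] using osc_le_doeblin_funpow[OF doeb _ assms(2)] False
        \<open>x \<in> W\<close> \<open>y \<in> W\<close> by (intro sum_mono) (auto simp: osc_le_def)
    also have "\<dots> \<le> m0 / (1 - (1 - lam)) * d"
      unfolding sum_distrib_right[symmetric] using sum_power_div_le[of m0 "1 - lam" k] False
        \<open>0 < lam\<close> \<open>lam \<le> 1\<close> \<open>0 \<le> d\<close> by (intro mult_right_mono) auto
    finally show ?thesis
      by (simp add: mult.commute)
  qed
qed

end

section \<open>Concentration of additive functionals\<close>

context stochastic_kernel
begin

lemma path_prob_nonneg:
  assumes "\<And>w. w \<in> W \<Longrightarrow> 0 \<le> p0 w" and "p \<in> PiE {..n} (\<lambda>_. W)"
  shows "0 \<le> path_prob p0 P n p"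
  using assms unfolding path_prob_def by (auto intro!: mult_nonneg_nonneg prod_nonneg nonneg)

lemma path_sum_Ssum:
  "(\<Sum>p\<in>PiE {..n} (\<lambda>_. W). path_prob p0 P n p * (Ssum f n p + v (p n)))
     = (\<Sum>w\<in>W. p0 w * (bellman_op W P f ^^ n) v w)"
proof (induction n arbitrary: v)
  case 0
  have "{..0::nat} = insert 0 {}"
    by auto
  then show ?case
    by (simp add: sum_PiE_insert path_prob_def Ssum_def)
next
  case (Suc n)
  have "{..Suc n} = insert (Suc n) {..n}"
    by auto
  then have "(\<Sum>p\<in>PiE {..Suc n} (\<lambda>_. W). path_prob p0 P (Suc n) p * (Ssum f (Suc n) p + v (p (Suc n))))
      = (\<Sum>q\<in>PiE {..n} (\<lambda>_. W). path_prob p0 P n q *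
           (\<Sum>w\<in>W. P (q n) w * (Ssum f n q + (f (q n, w) + v w))))"
    by (simp add: sum_PiE_insert path_prob_fun_upd_Suc Ssum_fun_upd_Suc sum_distrib_left mult.assoc add.assoc)
  also have "\<dots> = (\<Sum>q\<in>PiE {..n} (\<lambda>_. W). path_prob p0 P n q * (Ssum f n q + bellman_op W P f v (q n)))"
  proof (intro sum.cong refl arg_cong2[where f = "(*)"])
    fix q assume "q \<in> PiE {..n} (\<lambda>_. W)"
    then have "sum (P (q n)) W = 1"
      by (auto intro: row_sum)
    then show "(\<Sum>w\<in>W. P (q n) w * (Ssum f n q + (f (q n, w) + v w))) = Ssum f n q + bellman_op W P f v (q n)"
      by (simp add: bellman_op_def distrib_left sum.distrib flip: sum_distrib_right)
  qed
  also have "\<dots> = (\<Sum>w\<in>W. p0 w * (bellman_op W P f ^^ Suc n) v w)"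
    by (simp add: Suc.IH funpow_Suc_right del: funpow.simps)
  finally show ?case .
qed

text \<open>One step of the martingale argument: centred at its conditional mean, the increment
  \<open>f(w, w') + h w'\<close> ranges over an interval of length \<open>2F + D\<close>, so Hoeffding's lemma applies.\<close>

lemma kapply_exp_le:
  assumes f_bound: "\<And>w'. w' \<in> W \<Longrightarrow> 0 < P w w' \<Longrightarrow> \<bar>f (w, w')\<bar> \<le> F"
    and "osc_le W h D" and "2 * F + D \<le> c" and "0 \<le> s" and "w \<in> W"
  shows "kapply W P (\<lambda>w'. exp (s * (f (w, w') + h w'))) w \<le> exp (s * bellman_op W P f h w + s\<^sup>2 * c\<^sup>2 / 8)"
proof -
  obtain m where m: "\<And>w'. w' \<in> W \<Longrightarrow> m \<le> h w' \<and> h w' \<le> m + D"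
    using osc_le_interval[OF finite_W _ assms(2)] \<open>w \<in> W\<close> by blast
  define X where "X w' = f (w, w') + h w' - bellman_op W P f h w" for w'
  define a where "a = m - F - bellman_op W P f h w"
  have "X w' \<in> {a..a + c}" if "w' \<in> W" and "0 < P w w'" for w'
    using f_bound[OF that] m[OF \<open>w' \<in> W\<close>] \<open>2 * F + D \<le> c\<close> by (auto simp: X_def a_def abs_le_iff)
  moreover have "(\<Sum>w'\<in>W. P w w' * X w') = 0"
    using row_sum[OF \<open>w \<in> W\<close>]
    by (simp add: X_def bellman_op_def right_diff_distrib sum_subtractf flip: sum_distrib_right)
  ultimately have "(\<Sum>w'\<in>W. P w w' * exp (s * X w')) \<le> exp (s\<^sup>2 * (a + c - a)\<^sup>2 / 8)"
    using nonneg \<open>w \<in> W\<close> row_sum \<open>0 \<le> s\<close> by (intro Hoeffdings_lemma_finite[OF finite_W]) auto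
  moreover have "kapply W P (\<lambda>w'. exp (s * (f (w, w') + h w'))) w
      = exp (s * bellman_op W P f h w) * (\<Sum>w'\<in>W. P w w' * exp (s * X w'))"
    unfolding kapply_def sum_distrib_left
  proof (intro sum.cong refl)
    fix w'
    have "s * (f (w, w') + h w') = s * bellman_op W P f h w + s * X w'"
      by (simp add: X_def algebra_simps)
    then show "P w w' * exp (s * (f (w, w') + h w')) = exp (s * bellman_op W P f h w) * (P w w' * exp (s * X w'))"
      by (simp add: exp_add)
  qed
  ultimately show ?thesis
    by (simp add: exp_add)
qed

lemma mgf_Ssum_le:
  assumes f_bound: "\<And>w w'. w \<in> W \<Longrightarrow> w' \<in> W \<Longrightarrow> 0 < P w w' \<Longrightarrow> \<bar>f (w, w')\<bar> \<le> F"
    and osc: "\<And>k. osc_le W ((bellman_op W P f ^^ k) (\<lambda>_. 0)) D"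
    and "2 * F + D \<le> c" and "0 \<le> s" and "w \<in> W"
  shows "(kapply W (\<lambda>w w'. P w w' * exp (s * f (w, w'))) ^^ k) (\<lambda>_. 1) w
           \<le> exp (s * (bellman_op W P f ^^ k) (\<lambda>_. 0) w + k * s\<^sup>2 * c\<^sup>2 / 8)"
  using \<open>w \<in> W\<close>
proof (induction k arbitrary: w)
  case (Suc k)
  let ?h = "(bellman_op W P f ^^ k) (\<lambda>_. 0)" and ?C = "k * s\<^sup>2 * c\<^sup>2 / 8"
  have "(kapply W (\<lambda>w w'. P w w' * exp (s * f (w, w'))) ^^ Suc k) (\<lambda>_. 1) w
      \<le> kapply W (\<lambda>w w'. P w w' * exp (s * f (w, w'))) (\<lambda>w'. exp (s * ?h w' + ?C)) w"
    using Suc nonneg by (auto intro!: kapply_mono)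
  also have "\<dots> = exp ?C * kapply W P (\<lambda>w'. exp (s * (f (w, w') + ?h w'))) w"
    by (simp add: kapply_def sum_distrib_left distrib_left exp_add mult_ac)
  also have "\<dots> \<le> exp ?C * exp (s * bellman_op W P f ?h w + s\<^sup>2 * c\<^sup>2 / 8)"
    using kapply_exp_le[where f = f and F = F, OF f_bound[OF Suc.prems] osc \<open>2 * F + D \<le> c\<close> \<open>0 \<le> s\<close> Suc.prems] Suc.prems by simp
  also have "\<dots> = exp (s * (bellman_op W P f ^^ Suc k) (\<lambda>_. 0) w + Suc k * s\<^sup>2 * c\<^sup>2 / 8)"
    by (simp add: algebra_simps flip: exp_add)
  finally show ?case .
qed simp

lemma upper_tail_le_exp:
  fixes p0 :: "'a \<Rightarrow> real" and f :: "'a \<times> 'a \<Rightarrow> real" and n :: nat and \<epsilon> :: real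
  defines "ES \<equiv> \<Sum>p\<in>PiE {..n} (\<lambda>_. W). path_prob p0 P n p * Ssum f n p"
  assumes p0_nonneg: "\<And>w. w \<in> W \<Longrightarrow> 0 \<le> p0 w" and p0_sum: "sum p0 W = 1"
    and f_bound: "\<And>w w'. w \<in> W \<Longrightarrow> w' \<in> W \<Longrightarrow> 0 < P w w' \<Longrightarrow> \<bar>f (w, w')\<bar> \<le> F"
    and osc: "\<And>k. osc_le W ((bellman_op W P f ^^ k) (\<lambda>_. 0)) D"
    and "2 * F + D \<le> c" and "0 \<le> s"
  shows "(\<Sum>p\<in>{p\<in>PiE {..n} (\<lambda>_. W). real n * \<epsilon> \<le> Ssum f n p - ES}. path_prob p0 P n p)
           \<le> exp (- s * (real n * \<epsilon> - c) + real n * s\<^sup>2 * c\<^sup>2 / 8)"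
proof -
  let ?paths = "PiE {..n} (\<lambda>_. W)" and ?h = "(bellman_op W P f ^^ n) (\<lambda>_. 0)"
    and ?U = "kapply W (\<lambda>w w'. P w w' * exp (s * f (w, w')))" and ?C = "real n * s\<^sup>2 * c\<^sup>2 / 8"
  have ES_eq: "ES = (\<Sum>w\<in>W. p0 w * ?h w)"
    using path_sum_Ssum[of p0 n f "\<lambda>_. 0"] by (simp add: ES_def)
  have h_le: "?h w \<le> ES + c" if "w \<in> W" for w
  proof -
    obtain w' where "w' \<in> W" and "0 < P w w'"
      using support_nonempty[OF \<open>w \<in> W\<close>] .
    then have "0 \<le> F"
      using f_bound[OF \<open>w \<in> W\<close>] by fastforce
    then have "?h w - c \<le> ?h w'" if "w' \<in> W" for w'
      using osc[of n] \<open>w \<in> W\<close> that \<open>2 * F + D \<le> c\<close> unfolding osc_le_def by fastforce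
    then have "(\<Sum>w'\<in>W. p0 w' * (?h w - c)) \<le> (\<Sum>w'\<in>W. p0 w' * ?h w')"
      using p0_nonneg by (intro sum_mono mult_left_mono) auto
    then show ?thesis
      using p0_sum ES_eq by (simp flip: sum_distrib_right)
  qed
  have "(\<Sum>p\<in>{p\<in>?paths. real n * \<epsilon> \<le> Ssum f n p - ES}. path_prob p0 P n p)
      \<le> (\<Sum>p\<in>?paths. path_prob p0 P n p * exp (s * (Ssum f n p - ES - real n * \<epsilon>)))"
    using finite_W p0_nonneg \<open>0 \<le> s\<close>
    by (intro sum_ge_le_sum_exp) (auto simp: finite_PiE path_prob_nonneg)
  also have "\<dots> = exp (- s * (ES + real n * \<epsilon>)) * (\<Sum>p\<in>?paths. path_prob p0 P n p * exp (s * Ssum f n p))"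
    by (simp add: sum_distrib_left algebra_simps flip: exp_add)
  also have "(\<Sum>p\<in>?paths. path_prob p0 P n p * exp (s * Ssum f n p)) = (\<Sum>w\<in>W. p0 w * (?U ^^ n) (\<lambda>_. 1) w)"
    by (simp add: path_prob_mult_exp_Ssum path_sum_funpow_kapply[where u = "\<lambda>_. 1", simplified])
  also have "(\<Sum>w\<in>W. p0 w * (?U ^^ n) (\<lambda>_. 1) w) \<le> (\<Sum>w\<in>W. p0 w * exp (s * (ES + c) + ?C))"
  proof (intro sum_mono mult_left_mono)
    fix w assume "w \<in> W"
    have "(?U ^^ n) (\<lambda>_. 1) w \<le> exp (s * ?h w + ?C)"
      by (rule mgf_Ssum_le[OF f_bound osc \<open>2 * F + D \<le> c\<close> \<open>0 \<le> s\<close> \<open>w \<in> W\<close>])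
    also have "\<dots> \<le> exp (s * (ES + c) + ?C)"
      using h_le[OF \<open>w \<in> W\<close>] \<open>0 \<le> s\<close> by (simp add: mult_left_mono)
    finally show "(?U ^^ n) (\<lambda>_. 1) w \<le> exp (s * (ES + c) + ?C)" .
  qed (use p0_nonneg in auto)
  also have "exp (- s * (ES + real n * \<epsilon>)) * (\<Sum>w\<in>W. p0 w * exp (s * (ES + c) + ?C))
      = exp (- s * (real n * \<epsilon> - c) + ?C)"
    using p0_sum by (simp add: algebra_simps flip: sum_distrib_right exp_add)
  finally show ?thesis
    by simp
qed

lemma upper_tail_le:
  fixes p0 :: "'a \<Rightarrow> real" and f :: "'a \<times> 'a \<Rightarrow> real" and n :: nat and \<epsilon> :: real
  defines "ES \<equiv> \<Sum>p\<in>PiE {..n} (\<lambda>_. W). path_prob p0 P n p * Ssum f n p"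
  assumes p0_nonneg: "\<And>w. w \<in> W \<Longrightarrow> 0 \<le> p0 w" and p0_sum: "sum p0 W = 1"
    and f_bound: "\<And>w w'. w \<in> W \<Longrightarrow> w' \<in> W \<Longrightarrow> 0 < P w w' \<Longrightarrow> \<bar>f (w, w')\<bar> \<le> F"
    and osc: "\<And>k. osc_le W ((bellman_op W P f ^^ k) (\<lambda>_. 0)) D"
    and "2 * F + D \<le> c" and "c < real n * \<epsilon>"
  shows "(\<Sum>p\<in>{p\<in>PiE {..n} (\<lambda>_. W). real n * \<epsilon> \<le> Ssum f n p - ES}. path_prob p0 P n p)
           \<le> exp (- 2 * (real n * \<epsilon> - c)\<^sup>2 / (real n * c\<^sup>2))"
proof (cases "real n * c\<^sup>2 = 0")
  case True
  have "(\<Sum>p\<in>{p\<in>PiE {..n} (\<lambda>_. W). real n * \<epsilon> \<le> Ssum f n p - ES}. path_prob p0 P n p) \<le> 1"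
    using upper_tail_le_exp[where s = 0 and n = n and \<epsilon> = \<epsilon>, OF p0_nonneg p0_sum f_bound osc \<open>2 * F + D \<le> c\<close>]
    by (simp add: ES_def)
  moreover have "exp (- 2 * (real n * \<epsilon> - c)\<^sup>2 / (real n * c\<^sup>2)) = 1"
    by (simp only: True) simp
  ultimately show ?thesis
    by linarith
next
  case False
  then have "0 < real n * c\<^sup>2"
    by simp
  define t where "t = real n * \<epsilon> - c"
  \<comment> \<open>the minimiser of the Chernoff exponent \<open>- s t + n s\<^sup>2 c\<^sup>2 / 8\<close>\<close>
  define s where "s = 4 * t / (real n * c\<^sup>2)"
  have "0 \<le> s"
    using \<open>0 < real n * c\<^sup>2\<close> \<open>c < real n * \<epsilon>\<close> by (simp add: s_def t_def)
  have "- s * t + real n * s\<^sup>2 * c\<^sup>2 / 8 = - 2 * t\<^sup>2 / (real n * c\<^sup>2)"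
    using \<open>0 < real n * c\<^sup>2\<close> by (simp add: s_def field_simps power2_eq_square)
  then show ?thesis
    using upper_tail_le_exp[where n = n and \<epsilon> = \<epsilon>, OF p0_nonneg p0_sum f_bound osc \<open>2 * F + D \<le> c\<close> \<open>0 \<le> s\<close>]
    by (simp add: ES_def t_def)
qed

lemma two_sided_tail_le:
  fixes p0 :: "'a \<Rightarrow> real" and f :: "'a \<times> 'a \<Rightarrow> real" and n :: nat and \<epsilon> :: real
  defines "ES \<equiv> \<Sum>p\<in>PiE {..n} (\<lambda>_. W). path_prob p0 P n p * Ssum f n p"
  assumes p0_nonneg: "\<And>w. w \<in> W \<Longrightarrow> 0 \<le> p0 w" and p0_sum: "sum p0 W = 1"
    and f_bound: "\<And>w w'. w \<in> W \<Longrightarrow> w' \<in> W \<Longrightarrow> 0 < P w w' \<Longrightarrow> \<bar>f (w, w')\<bar> \<le> F"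
    and osc: "\<And>k. osc_le W ((bellman_op W P f ^^ k) (\<lambda>_. 0)) D"
    and "2 * F + D \<le> c" and "c < real n * \<epsilon>"
  shows "(\<Sum>p\<in>{p\<in>PiE {..n} (\<lambda>_. W). real n * \<epsilon> \<le> \<bar>Ssum f n p - ES\<bar>}. path_prob p0 P n p)
           \<le> 2 * exp (- 2 * (real n * \<epsilon> - c)\<^sup>2 / (real n * c\<^sup>2))"
proof -
  let ?paths = "PiE {..n} (\<lambda>_. W)" and ?bound = "exp (- 2 * (real n * \<epsilon> - c)\<^sup>2 / (real n * c\<^sup>2))"
  have "(\<Sum>p\<in>{p\<in>?paths. real n * \<epsilon> \<le> Ssum f n p - ES}. path_prob p0 P n p) \<le> ?bound"
    using upper_tail_le[OF p0_nonneg p0_sum f_bound osc \<open>2 * F + D \<le> c\<close> \<open>c < real n * \<epsilon>\<close>]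
    unfolding ES_def .
  moreover have "(\<Sum>p\<in>{p\<in>?paths. real n * \<epsilon> \<le> - (Ssum f n p - ES)}. path_prob p0 P n p) \<le> ?bound"
  proof -
    have "Ssum (\<lambda>x. - f x) n p = - Ssum f n p" for p
      by (simp add: Ssum_def sum_negf)
    moreover have "\<bar>- f (w, w')\<bar> \<le> F" if "w \<in> W" "w' \<in> W" "0 < P w w'" for w w'
      using f_bound[OF that] by simp
    moreover have "osc_le W ((bellman_op W P (\<lambda>x. - f x) ^^ k) (\<lambda>_. 0)) D" for k
      using osc by (simp add: funpow_bellman_op_uminus osc_le_uminus)
    ultimately have "(\<Sum>p\<in>{p\<in>?paths. real n * \<epsilon> \<le> - Ssum f n p
        - (\<Sum>q\<in>?paths. path_prob p0 P n q * - Ssum f n q)}. path_prob p0 P n p) \<le> ?bound"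
      using upper_tail_le[where f = "\<lambda>x. - f x", OF p0_nonneg p0_sum _ _ \<open>2 * F + D \<le> c\<close> \<open>c < real n * \<epsilon>\<close>]
      by simp
    then show ?thesis
      by (simp add: ES_def sum_negf)
  qed
  ultimately show ?thesis
    using sum_abs_ge_le[of ?paths "path_prob p0 P n" "real n * \<epsilon>" "\<lambda>p. Ssum f n p - ES"]
      finite_W p0_nonneg by (simp add: finite_PiE path_prob_nonneg)
qed

end

section \<open>Lumped kernels\<close>

locale lumped_kernel = Z: stochastic_kernel Z K + W: stochastic_kernel W P
  for Z :: "'a set" and K :: "'a \<Rightarrow> 'a \<Rightarrow> real" and W :: "'b set" and P :: "'b \<Rightarrow> 'b \<Rightarrow> real" +
  fixes h :: "'a \<Rightarrow> 'b" and \<sigma> :: "'b \<Rightarrow> 'a"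
  assumes h_in: "z \<in> Z \<Longrightarrow> h z \<in> W"
    and \<sigma>_in: "w \<in> W \<Longrightarrow> \<sigma> w \<in> Z"
    and K_factors: "z \<in> Z \<Longrightarrow> K z = K (\<sigma> (h z))"
    and kapply_comp: "z \<in> Z \<Longrightarrow> kapply Z K (\<lambda>z'. u (h z')) z = kapply W P u (h z)"
begin

lemma kapply_funpow_bellman_op:
  assumes "z \<in> Z"
  shows "kapply Z K ((bellman_op Z K f ^^ k) (\<lambda>_. 0)) z
           = (\<Sum>s<k. (kapply W P ^^ s) (\<lambda>w. kapply Z K (mean_reward Z K f) (\<sigma> w)) (h z))"
  using assms
proof (induction k arbitrary: z)
  case 0
  then show ?case
    by (simp add: kapply_def)
next
  case (Suc k)
  let ?v = "\<lambda>w. kapply Z K (mean_reward Z K f) (\<sigma> w)"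
  let ?H = "\<lambda>w. \<Sum>s<k. (kapply W P ^^ s) ?v w"
  have "kapply Z K ((bellman_op Z K f ^^ Suc k) (\<lambda>_. 0)) z
      = kapply Z K (\<lambda>z'. mean_reward Z K f z' + ?H (h z')) z"
    using Suc.IH by (intro kapply_cong) (simp only: funpow_bellman_op_Suc)
  also have "\<dots> = ?v (h z) + kapply W P ?H (h z)"
    using K_factors[OF Suc.prems] kapply_comp[OF Suc.prems] by (simp add: kapply_add kapply_def)
  also have "\<dots> = (\<Sum>s<Suc k. (kapply W P ^^ s) ?v (h z))"
    by (simp add: kapply_sum sum.lessThan_Suc_shift del: sum.lessThan_Suc)
  finally show ?case .
qed

lemma osc_le_funpow_bellman_op:
  assumes doeb: "doeblin W P m0 lam"
    and f_bound: "\<And>z z'. z \<in> Z \<Longrightarrow> z' \<in> Z \<Longrightarrow> 0 < K z z' \<Longrightarrow> \<bar>f (z, z')\<bar> \<le> F"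
  shows "osc_le Z ((bellman_op Z K f ^^ k) (\<lambda>_. 0)) (2 * F + 2 * F * m0 / lam)"
  unfolding osc_le_def
proof (intro ballI)
  fix x y assume "x \<in> Z" "y \<in> Z"
  obtain x' where "x' \<in> Z" and "0 < K x x'"
    using Z.support_nonempty[OF \<open>x \<in> Z\<close>] .
  then have "0 \<le> F"
    using f_bound[OF \<open>x \<in> Z\<close>] by fastforce
  have "0 < lam"
    using doeb unfolding doeblin_def by blast
  let ?v = "\<lambda>w. kapply Z K (mean_reward Z K f) (\<sigma> w)"
  let ?H = "\<lambda>k w. \<Sum>s<k. (kapply W P ^^ s) ?v w"
  have mean_bound: "\<bar>mean_reward Z K f z\<bar> \<le> F" if "z \<in> Z" for z
    unfolding mean_reward_def using that f_bound[OF that] by (rule Z.kapply_abs_le)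
  have v_bound: "\<bar>?v w\<bar> \<le> F" if "w \<in> W" for w
    using \<sigma>_in[OF that] mean_bound by (rule Z.kapply_abs_le)
  have "osc_le W ?v (2 * F)"
    unfolding osc_le_def
  proof (intro ballI)
    fix w w' assume "w \<in> W" "w' \<in> W"
    then show "?v w - ?v w' \<le> 2 * F"
      using v_bound[of w] v_bound[of w'] by (simp add: abs_le_iff)
  qed
  then have osc_H: "osc_le W (?H k') (2 * F * m0 / lam)" for k'
    by (rule W.osc_le_sum_funpow_kapply[OF doeb])
  show "(bellman_op Z K f ^^ k) (\<lambda>_. 0) x - (bellman_op Z K f ^^ k) (\<lambda>_. 0) y \<le> 2 * F + 2 * F * m0 / lam"
  proof (cases k)
    case 0
    then show ?thesis
      using \<open>0 \<le> F\<close> \<open>0 < lam\<close> by simp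
  next
    case (Suc k')
    then have eq: "(bellman_op Z K f ^^ k) (\<lambda>_. 0) z = mean_reward Z K f z + ?H k' (h z)" if "z \<in> Z" for z
      using kapply_funpow_bellman_op[OF that] by (simp only: funpow_bellman_op_Suc)
    have "?H k' (h x) - ?H k' (h y) \<le> 2 * F * m0 / lam"
      using osc_H[of k'] h_in \<open>x \<in> Z\<close> \<open>y \<in> Z\<close> unfolding osc_le_def by blast
    then show ?thesis
      unfolding eq[OF \<open>x \<in> Z\<close>] eq[OF \<open>y \<in> Z\<close>]
      using mean_bound[OF \<open>x \<in> Z\<close>] mean_bound[OF \<open>y \<in> Z\<close>] by (simp add: abs_le_iff)
  qed
qed

end

section \<open>The post-attack chain\<close>

lemma kapply_kernelZ_lift:
  "kapply (Zs N M) (kernelZ R \<gamma> \<phi>) (\<lambda>z'. u (fst z', fst (snd z'))) (i, j, l)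
     = kapply (Xs N \<times> As M) (kernelXA N R \<gamma> \<phi>) u (i, j)"
proof -
  have "kapply (Zs N M) (kernelZ R \<gamma> \<phi>) (\<lambda>z'. u (fst z', fst (snd z'))) (i, j, l)
      = (\<Sum>i'\<in>Xs N. \<Sum>j'\<in>As M. \<Sum>l'\<in>Xs N. R i j i' * \<phi> i i' l' * \<gamma> l' j' * u (i', j'))"
    by (simp add: kapply_def Zs_def kernelZ_def sum.cartesian_product split_def)
  also have "\<dots> = (\<Sum>i'\<in>Xs N. \<Sum>j'\<in>As M. R i j i' * (\<Sum>l'\<in>Xs N. \<phi> i i' l' * \<gamma> l' j') * u (i', j'))"
    by (simp add: sum_distrib_left sum_distrib_right mult.assoc)
  also have "\<dots> = kapply (Xs N \<times> As M) (kernelXA N R \<gamma> \<phi>) u (i, j)"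
    by (simp add: kapply_def kernelXA_def sum.cartesian_product split_def)
  finally show ?thesis .
qed

lemma finite_Zs: "finite (Zs N M)"
  by (simp add: Zs_def Xs_def As_def)

lemma abs_le_fnorm:
  assumes "z \<in> Zs N M" and "z' \<in> Zs N M" and "0 < kernelZ R \<gamma> \<phi> z z'"
  shows "\<bar>f (z, z')\<bar> \<le> fnorm (Omega N M R \<gamma> \<phi>) f"
proof -
  have "Omega N M R \<gamma> \<phi> \<subseteq> Zs N M \<times> Zs N M"
    by (auto simp: Omega_def)
  then have "finite (Omega N M R \<gamma> \<phi>)"
    by (rule finite_subset) (simp add: finite_Zs)
  moreover have "(z, z') \<in> Omega N M R \<gamma> \<phi>"
    using assms by (simp add: Omega_def)
  ultimately show ?thesis
    unfolding fnorm_def by (intro Max_ge) auto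
qed

lemma min_nonzero_stochastic_bounds:
  fixes p :: "'i \<Rightarrow> 'j \<Rightarrow> real"
  assumes "finite I" and "finite J" and "i\<^sub>0 \<in> I"
    and nonneg: "\<And>i j. i \<in> I \<Longrightarrow> j \<in> J \<Longrightarrow> 0 \<le> p i j" and row_sum: "\<And>i. i \<in> I \<Longrightarrow> sum (p i) J = 1"
  shows "0 < min_nonzero {p i j | i j. i \<in> I \<and> j \<in> J}" and "min_nonzero {p i j | i j. i \<in> I \<and> j \<in> J} \<le> 1"
proof -
  let ?S = "{p i j | i j. i \<in> I \<and> j \<in> J}"
  have "?S = (\<lambda>(i, j). p i j) ` (I \<times> J)"
    by auto
  then have "finite (?S - {0})"
    using assms by simp
  have bounds: "0 \<le> x \<and> x \<le> 1" if x: "x \<in> ?S" for x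
  proof -
    obtain i j where "x = p i j" and "i \<in> I" and "j \<in> J"
      using x by blast
    moreover have "p i j \<le> sum (p i) J"
      using nonneg \<open>i \<in> I\<close> \<open>j \<in> J\<close> \<open>finite J\<close> by (intro member_le_sum) auto
    ultimately show ?thesis
      using nonneg row_sum by simp
  qed
  obtain j0 where "j0 \<in> J" and "p i\<^sub>0 j0 \<noteq> 0"
    using row_sum[OF \<open>i\<^sub>0 \<in> I\<close>] by (metis sum.neutral zero_neq_one)
  then have "?S - {0} \<noteq> {}"
    using \<open>i\<^sub>0 \<in> I\<close> by blast
  then have "min_nonzero ?S \<in> ?S - {0}"
    unfolding min_nonzero_def using \<open>finite (?S - {0})\<close> by (intro Min_in)
  then show "0 < min_nonzero ?S" and "min_nonzero ?S \<le> 1"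
    using bounds by (auto simp: order_less_le)
qed

locale attack_model =
  fixes N M :: nat and R \<phi> :: "nat \<Rightarrow> nat \<Rightarrow> nat \<Rightarrow> real" and \<gamma> :: "nat \<Rightarrow> nat \<Rightarrow> real"
  assumes N_ge_1: "N \<ge> 1" and M_ge_1: "M \<ge> 1"
    and R_nonneg: "\<forall>i\<in>Xs N. \<forall>j\<in>As M. \<forall>i'\<in>Xs N. R i j i' \<ge> 0"
    and R_sum: "\<forall>i\<in>Xs N. \<forall>j\<in>As M. (\<Sum>i'\<in>Xs N. R i j i') = 1"
    and \<gamma>_nonneg: "\<forall>l\<in>Xs N. \<forall>j\<in>As M. \<gamma> l j \<ge> 0"
    and \<gamma>_sum: "\<forall>l\<in>Xs N. (\<Sum>j\<in>As M. \<gamma> l j) = 1"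
    and \<phi>_nonneg: "\<forall>i\<in>Xs N. \<forall>i'\<in>Xs N. \<forall>l\<in>Xs N. \<phi> i i' l \<ge> 0"
    and \<phi>_sum: "\<forall>i\<in>Xs N. \<forall>i'\<in>Xs N. (\<Sum>l\<in>Xs N. \<phi> i i' l) = 1"
begin

lemma one_in_Xs: "1 \<in> Xs N" and one_in_As: "1 \<in> As M"
  using N_ge_1 M_ge_1 by (auto simp: Xs_def As_def)

sublocale XA: stochastic_kernel "Xs N \<times> As M" "kernelXA N R \<gamma> \<phi>"
proof
  show "finite (Xs N \<times> As M)"
    by (simp add: Xs_def As_def)
  show "0 \<le> kernelXA N R \<gamma> \<phi> w w'" if "w \<in> Xs N \<times> As M" and "w' \<in> Xs N \<times> As M" for w w'
    using that R_nonneg \<gamma>_nonneg \<phi>_nonneg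
    by (auto simp: kernelXA_def intro!: mult_nonneg_nonneg sum_nonneg)
  show "sum (kernelXA N R \<gamma> \<phi> w) (Xs N \<times> As M) = 1" if "w \<in> Xs N \<times> As M" for w
  proof -
    obtain i j where w: "w = (i, j)"
      by (cases w)
    then have "i \<in> Xs N" and "j \<in> As M"
      using that by auto
    have inner: "(\<Sum>j'\<in>As M. \<Sum>l\<in>Xs N. \<phi> i i' l * \<gamma> l j') = 1" if "i' \<in> Xs N" for i'
    proof -
      have "(\<Sum>j'\<in>As M. \<Sum>l\<in>Xs N. \<phi> i i' l * \<gamma> l j') = (\<Sum>l\<in>Xs N. \<phi> i i' l * sum (\<gamma> l) (As M))"
        by (subst sum.swap) (simp add: sum_distrib_left)
      then show ?thesis
        using \<gamma>_sum \<phi>_sum \<open>i \<in> Xs N\<close> that by simp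
    qed
    have "sum (kernelXA N R \<gamma> \<phi> w) (Xs N \<times> As M)
        = (\<Sum>i'\<in>Xs N. R i j i' * (\<Sum>j'\<in>As M. \<Sum>l\<in>Xs N. \<phi> i i' l * \<gamma> l j'))"
      unfolding w kernelXA_def by (simp add: sum.cartesian_product[symmetric] sum_distrib_left)
    then show ?thesis
      using inner R_sum \<open>i \<in> Xs N\<close> \<open>j \<in> As M\<close> by simp
  qed
qed

sublocale Z: stochastic_kernel "Zs N M" "kernelZ R \<gamma> \<phi>"
proof
  show "finite (Zs N M)"
    by (rule finite_Zs)
  show "0 \<le> kernelZ R \<gamma> \<phi> z z'" if "z \<in> Zs N M" and "z' \<in> Zs N M" for z z'
    using that R_nonneg \<gamma>_nonneg \<phi>_nonneg by (auto simp: Zs_def kernelZ_def)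
  show "sum (kernelZ R \<gamma> \<phi> z) (Zs N M) = 1" if "z \<in> Zs N M" for z
  proof -
    obtain i j l where z: "z = (i, j, l)"
      by (cases z)
    then have "(i, j) \<in> Xs N \<times> As M"
      using that by (auto simp: Zs_def)
    have "sum (kernelZ R \<gamma> \<phi> z) (Zs N M) = kapply (Xs N \<times> As M) (kernelXA N R \<gamma> \<phi>) (\<lambda>_. 1) (i, j)"
      using kapply_kernelZ_lift[where u = "\<lambda>_. 1"] by (simp add: z kapply_def)
    then show ?thesis
      using XA.row_sum[OF \<open>(i, j) \<in> Xs N \<times> As M\<close>] by (simp add: kapply_def)
  qed
qed

text \<open>The state-action chain is a lumping of the chain \<open>Z\<^sub>t\<close>: a transition out of \<open>(i, j, l)\<close>
  does not depend on the observation \<open>l\<close>.\<close>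

sublocale lumped: lumped_kernel "Zs N M" "kernelZ R \<gamma> \<phi>" "Xs N \<times> As M" "kernelXA N R \<gamma> \<phi>"
  "\<lambda>z. (fst z, fst (snd z))" "\<lambda>w. (fst w, snd w, 1)"
proof
  show "(fst z, fst (snd z)) \<in> Xs N \<times> As M" if "z \<in> Zs N M" for z
    using that by (auto simp: Zs_def)
  show "(fst w, snd w, 1) \<in> Zs N M" if "w \<in> Xs N \<times> As M" for w
    using that one_in_Xs by (auto simp: Zs_def)
  show "kernelZ R \<gamma> \<phi> z = kernelZ R \<gamma> \<phi> (fst (fst z, fst (snd z)), snd (fst z, fst (snd z)), 1)" for z
    by (auto simp: fun_eq_iff kernelZ_def split: prod.splits)
  show "kapply (Zs N M) (kernelZ R \<gamma> \<phi>) (\<lambda>z'. u (fst z', fst (snd z'))) z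
      = kapply (Xs N \<times> As M) (kernelXA N R \<gamma> \<phi>) u (fst z, fst (snd z))" for z u
    using kapply_kernelZ_lift[of N M R \<gamma> \<phi> u "fst z" "fst (snd z)" "snd (snd z)"] by simp
qed

lemma Rmin_bounds: "0 < Rmin N M R" "Rmin N M R \<le> 1"
proof -
  have "{R i j i' | i j i'. i \<in> Xs N \<and> j \<in> As M \<and> i' \<in> Xs N}
      = {(\<lambda>(i, j). R i j) ij i' | ij i'. ij \<in> Xs N \<times> As M \<and> i' \<in> Xs N}"
    by fastforce
  moreover have "0 < min_nonzero {(\<lambda>(i, j). R i j) ij i' | ij i'. ij \<in> Xs N \<times> As M \<and> i' \<in> Xs N}"
    and "min_nonzero {(\<lambda>(i, j). R i j) ij i' | ij i'. ij \<in> Xs N \<times> As M \<and> i' \<in> Xs N} \<le> 1"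
    using R_nonneg R_sum one_in_Xs one_in_As
    by (intro min_nonzero_stochastic_bounds[of _ _ "(1, 1)"]; force simp: Xs_def As_def)+
  ultimately show "0 < Rmin N M R" "Rmin N M R \<le> 1"
    unfolding Rmin_def by simp_all
qed

lemma gmin_bounds: "0 < gmin N M \<gamma>" "gmin N M \<gamma> \<le> 1"
  unfolding gmin_def using \<gamma>_nonneg \<gamma>_sum one_in_Xs
  by (intro min_nonzero_stochastic_bounds[of _ _ 1]; force simp: Xs_def As_def)+

lemma phimin_bounds: "0 < phimin N \<phi>" "phimin N \<phi> \<le> 1"
proof -
  have "{\<phi> i i' l | i i' l. i \<in> Xs N \<and> i' \<in> Xs N \<and> l \<in> Xs N}
      = {(\<lambda>(i, i'). \<phi> i i') ii' l | ii' l. ii' \<in> Xs N \<times> Xs N \<and> l \<in> Xs N}"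
    by fastforce
  moreover have "0 < min_nonzero {(\<lambda>(i, i'). \<phi> i i') ii' l | ii' l. ii' \<in> Xs N \<times> Xs N \<and> l \<in> Xs N}"
    and "min_nonzero {(\<lambda>(i, i'). \<phi> i i') ii' l | ii' l. ii' \<in> Xs N \<times> Xs N \<and> l \<in> Xs N} \<le> 1"
    using \<phi>_nonneg \<phi>_sum one_in_Xs
    by (intro min_nonzero_stochastic_bounds[of _ _ "(1, 1)"]; force simp: Xs_def)+
  ultimately show "0 < phimin N \<phi>" "phimin N \<phi> \<le> 1"
    unfolding phimin_def by simp_all
qed

lemma fnorm_nonneg: "0 \<le> fnorm (Omega N M R \<gamma> \<phi>) f"
proof -
  have "(1, 1, 1) \<in> Zs N M"
    using one_in_Xs one_in_As by (simp add: Zs_def)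
  then obtain z' where "z' \<in> Zs N M" and "0 < kernelZ R \<gamma> \<phi> (1, 1, 1) z'"
    by (rule Z.support_nonempty)
  then show ?thesis
    using abs_le_fnorm[OF \<open>(1, 1, 1) \<in> Zs N M\<close>] by (meson abs_ge_zero order_trans)
qed

lemma doeblin_constant_le:
  assumes doeb: "doeblin (Xs N \<times> As M) (kernelXA N R \<gamma> \<phi>) m0 lam" and "0 \<le> F"
  shows "4 * F + 2 * F * m0 / lam
           \<le> 2 * (real m0 + 2) * F / (lam * Rmin N M R * (gmin N M \<gamma>)\<^sup>2 * (phimin N \<phi>)\<^sup>2)"
proof -
  define r where "r = Rmin N M R * (gmin N M \<gamma>)\<^sup>2 * (phimin N \<phi>)\<^sup>2"
  have "0 < r" and "r \<le> 1"
    using Rmin_bounds gmin_bounds phimin_bounds by (auto simp: r_def intro!: mult_le_one power_le_one)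
  have "0 < lam" and "lam \<le> 1"
    using doeb XA.doeblin_le_1 one_in_Xs one_in_As unfolding doeblin_def by blast+
  have "4 * F \<le> 4 * F / lam"
    using \<open>0 \<le> F\<close> \<open>0 < lam\<close> \<open>lam \<le> 1\<close> by (simp add: le_divide_eq mult_left_le)
  then have "4 * F + 2 * F * m0 / lam \<le> 2 * (real m0 + 2) * F / lam"
    by (simp add: algebra_simps add_divide_distrib)
  also have "\<dots> \<le> 2 * (real m0 + 2) * F / (lam * r)"
    using \<open>0 \<le> F\<close> \<open>0 < lam\<close> \<open>0 < r\<close> \<open>r \<le> 1\<close> by (intro divide_left_mono) (auto intro: mult_left_le)
  finally show ?thesis
    by (simp add: r_def mult.assoc)
qed

end

theorem lemma5:
  fixes N M :: nat
    and R \<phi> :: "nat \<Rightarrow> nat \<Rightarrow> nat \<Rightarrow> real"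
    and \<gamma> :: "nat \<Rightarrow> nat \<Rightarrow> real"
    and p0 :: "nat \<times> nat \<times> nat \<Rightarrow> real"
    and f :: "(nat \<times> nat \<times> nat) \<times> (nat \<times> nat \<times> nat) \<Rightarrow> real"
    and m0 :: nat and lam \<epsilon> :: real and n :: nat
  assumes "N \<ge> 1" and "M \<ge> 1"
    and R_nonneg: "\<forall>i\<in>Xs N. \<forall>j\<in>As M. \<forall>i'\<in>Xs N. R i j i' \<ge> 0"
    and R_sum: "\<forall>i\<in>Xs N. \<forall>j\<in>As M. (\<Sum>i'\<in>Xs N. R i j i') = 1"
    and \<gamma>_nonneg: "\<forall>l\<in>Xs N. \<forall>j\<in>As M. \<gamma> l j \<ge> 0"
    and \<gamma>_sum: "\<forall>l\<in>Xs N. (\<Sum>j\<in>As M. \<gamma> l j) = 1"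
    and \<phi>_nonneg: "\<forall>i\<in>Xs N. \<forall>i'\<in>Xs N. \<forall>l\<in>Xs N. \<phi> i i' l \<ge> 0"
    and \<phi>_sum: "\<forall>i\<in>Xs N. \<forall>i'\<in>Xs N. (\<Sum>l\<in>Xs N. \<phi> i i' l) = 1"
    and p0_nonneg: "\<forall>z\<in>Zs N M. p0 z \<ge> 0"
    and p0_sum: "(\<Sum>z\<in>Zs N M. p0 z) = 1"
    and doeb: "doeblin (Xs N \<times> As M) (kernelXA N R \<gamma> \<phi>) m0 lam"
    and eps: "\<epsilon> > 0"
  defines "K \<equiv> kernelZ R \<gamma> \<phi>"
    and "\<mu> \<equiv> 2 * (real m0 + 2) * fnorm (Omega N M R \<gamma> \<phi>) f /
             (lam * Rmin N M R * (gmin N M \<gamma>)\<^sup>2 * (phimin N \<phi>)\<^sup>2)"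
    and "ES \<equiv> (\<Sum>p\<in>paths N M n. path_prob p0 (kernelZ R \<gamma> \<phi>) n p * Ssum f n p)"
  assumes n_large: "real n > \<mu> / \<epsilon>"
  shows "(\<Sum>p\<in>{p\<in>paths N M n. \<bar>Ssum f n p - ES\<bar> \<ge> real n * \<epsilon>}. path_prob p0 K n p)
           \<le> 2 * exp (- 2 * (real n * \<epsilon> - \<mu>)\<^sup>2 / (real n * \<mu>\<^sup>2))"
proof -
  interpret attack_model N M R \<phi> \<gamma>
    by unfold_locales fact+
  define F where "F = fnorm (Omega N M R \<gamma> \<phi>) f"
  have f_bound: "\<And>z z'. z \<in> Zs N M \<Longrightarrow> z' \<in> Zs N M \<Longrightarrow> 0 < K z z' \<Longrightarrow> \<bar>f (z, z')\<bar> \<le> F"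
    unfolding F_def K_def by (rule abs_le_fnorm)
  have osc: "osc_le (Zs N M) ((bellman_op (Zs N M) K f ^^ k) (\<lambda>_. 0)) (2 * F + 2 * F * m0 / lam)" for k
    unfolding K_def by (rule lumped.osc_le_funpow_bellman_op[where f = f and F = F, OF doeb f_bound[unfolded K_def]])
  have "2 * F + (2 * F + 2 * F * m0 / lam) \<le> \<mu>"
    using doeblin_constant_le[OF doeb fnorm_nonneg] by (simp add: \<mu>_def F_def)
  moreover have "\<mu> < real n * \<epsilon>"
    using n_large eps by (simp add: divide_less_eq)
  ultimately show ?thesis
    using Z.two_sided_tail_le[OF p0_nonneg[rule_format] p0_sum f_bound[unfolded K_def] osc[unfolded K_def]]
    unfolding ES_def K_def paths_def by blast
qed

end
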